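(* With $Y^+$ as in the context, there is an isomorphism of $\mathbb{Z}$-modules $\mathrm{BF}(Y^+)\cong\mathbb{Z}^{\frac{p-3}{2}}\oplus\mathbb{Z}/p\mathbb{Z}$.
   Context: Let $p$ be an odd prime, $\Delta=\mathrm{Gal}(\mathbb{Q}(\zeta_p)/\mathbb{Q})$, $\sigma_i:\zeta_p\mapsto\zeta_p^i$, $j=\sigma_{-1}$. Digraphs have incidence $e\mapsto(o(e),t(e))$; the derived digraph $X(G,\alpha)$ of $\alpha:E_X\to G$ has vertices $V_X\times G$, edges $E_X\times G$, $o(e,\sigma)=(o(e),\sigma)$, $t(e,\sigma)=(t(e),\sigma\alpha(e))$, with $G$ acting by left multiplication on the second coordinate. $X$ is the bouquet with $\frac{p-1}{2}p+1$ loops $e_0$, $e_{i,k}$ ($1\le k\le i\le p-1$), $\alpha(e_0)=\sigma_1$, $\alpha(e_{i,k})=\sigma_i^{-1}$, $Y=X(\Delta,\alpha)$, and $Y^+=Y_{\langle j\rangle}$ is the quotient digraph by $\langle j\rangle$. For a finite digraph $W$, $\mathcal{A}_W(w)=\sum_{o(\varepsilon)=w}t(\varepsilon)$ on $\mathbb{Z}V_W$ and $\mathrm{BF}(W)=\mathrm{coker}(\mathcal{I}-\mathcal{A}_W)$. *)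

theory Defs
  imports "HOL-Algebra.Free_Abelian_Groups" "HOL-Number_Theory.Residues"
    "Graph_Theory.Digraph"
begin

text \<open>Digraphs are Graph_Theory's pre_digraph records; o(e) = tail, t(e) = head.\<close>

definition derived_digraph ::
  "('v,'e) pre_digraph \<Rightarrow> ('g,'b) monoid_scheme \<Rightarrow> ('e \<Rightarrow> 'g) \<Rightarrow> ('v \<times> 'g, 'e \<times> 'g) pre_digraph"
  where "derived_digraph X G \<alpha> =
    \<lparr> verts = verts X \<times> carrier G,
      arcs = arcs X \<times> carrier G,
      tail = (\<lambda>(e,s). (tail X e, s)),
      head = (\<lambda>(e,s). (head X e, s \<otimes>\<^bsub>G\<^esub> \<alpha> e)) \<rparr>"

definition left_orbit :: "('g,'b) monoid_scheme \<Rightarrow> 'g set \<Rightarrow> 'a \<times> 'g \<Rightarrow> ('a \<times> 'g) set"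
  where "left_orbit G H x = {(fst x, h \<otimes>\<^bsub>G\<^esub> snd x) | h. h \<in> H}"

definition quotient_digraph ::
  "('v \<times> 'g, 'e \<times> 'g) pre_digraph \<Rightarrow> ('g,'b) monoid_scheme \<Rightarrow> 'g set
     \<Rightarrow> (('v \<times> 'g) set, ('e \<times> 'g) set) pre_digraph"
  where "quotient_digraph Y G H =
    \<lparr> verts = left_orbit G H ` verts Y,
      arcs = left_orbit G H ` arcs Y,
      tail = (\<lambda>Q. left_orbit G H (tail Y (SOME e. e \<in> Q))),
      head = (\<lambda>Q. left_orbit G H (head Y (SOME e. e \<in> Q))) \<rparr>"

definition adj_op :: "('v,'e) pre_digraph \<Rightarrow> 'v \<Rightarrow> 'v \<Rightarrow>\<^sub>0 int"
  where "adj_op W w = (\<Sum>\<epsilon>\<in>{\<epsilon> \<in> arcs W. tail W \<epsilon> = w}. frag_of (head W \<epsilon>))"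

definition BF :: "('v,'e) pre_digraph \<Rightarrow> ('v \<Rightarrow>\<^sub>0 int) set monoid"
  where "BF W = free_Abelian_group (verts W) Mod
     ((\<lambda>c. c - frag_extend (adj_op W) c) ` carrier (free_Abelian_group (verts W)))"

text \<open>Delta = Gal(Q(zeta_p)/Q), identified with (Z/pZ)^* via sigma_i <-> i mod p.\<close>
definition Delta :: "nat \<Rightarrow> int monoid"
  where "Delta p = units_of (residue_ring (int p))"

definition sigma :: "nat \<Rightarrow> nat \<Rightarrow> int"
  where "sigma p i = int i mod int p"

datatype bedge = E0 | E nat nat

definition bouquetX :: "nat \<Rightarrow> (unit, bedge) pre_digraph"
  where "bouquetX p =
    \<lparr> verts = {()},
      arcs = {E0} \<union> {E i k | i k. 1 \<le> k \<and> k \<le> i \<and> i \<le> p - 1},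
      tail = (\<lambda>_. ()),
      head = (\<lambda>_. ()) \<rparr>"

definition alphaX :: "nat \<Rightarrow> bedge \<Rightarrow> int"
  where "alphaX p e = (case e of E0 \<Rightarrow> sigma p 1
                        | E i k \<Rightarrow> inv\<^bsub>Delta p\<^esub> (sigma p i))"

definition Y :: "nat \<Rightarrow> (unit \<times> int, bedge \<times> int) pre_digraph"
  where "Y p = derived_digraph (bouquetX p) (Delta p) (alphaX p)"

definition jconj :: "nat \<Rightarrow> int"
  where "jconj p = sigma p (p - 1)"

definition Yplus :: "nat \<Rightarrow> ((unit \<times> int) set, (bedge \<times> int) set) pre_digraph"
  where "Yplus p = quotient_digraph (Y p) (Delta p) (generate (Delta p) {jconj p})"

end

theory Submission
  imports Defs
begin

(* The vertices of Y+ are the classes [s] = {sigma_s, sigma_(-s)} of units s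
   mod p, so there are (p - 1)/2 of them. From [s] the loop e_0 returns to [s] and, for
   each unit u, there are u edges e_(u,k) to [s u^-1]; thus A = I + T with
   T [s] = sum_u u [s u^-1]. For a fixed target [t] the units u with [s u^-1] = [t] are
   x = t^-1 s and p - x, whose weights add up to p, so T is p times the all-ones
   operator. Hence I - A maps c to -p (sum of the coefficients of c) N, N the sum of all
   vertices, and BF(Y+) = Z^V / p Z N. Fixing a vertex v0, the map
   c |-> ((c_v - c_v0)_(v <> v0), c_v0 mod p) identifies this quotient with
   Z^(|V| - 1) + Z/p. *)

lemma sum_const_frag:
  "finite A \<Longrightarrow> (\<Sum>x\<in>A. c) = frag_cmul (int (card A)) c"
  by (induction A rule: finite_induct) (auto simp: frag_cmul_distrib)

lemma lookup_sum_frag_of: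
  "finite V \<Longrightarrow> Poly_Mapping.lookup (\<Sum>v\<in>V. frag_of v) x = (if x \<in> V then 1 else 0)"
  by (simp add: lookup_sum)

lemma lookup_sum_frag_cmul_frag_of:
  assumes "finite A"
  shows "Poly_Mapping.lookup (\<Sum>u\<in>A. frag_cmul (a u) (frag_of (f u))) y = (\<Sum>u\<in>{u\<in>A. f u = y}. a u)"
  using assms by (auto simp: lookup_sum sum.inter_filter intro!: sum.cong)

lemma keys_subsetI:
  "(\<And>x. x \<notin> V \<Longrightarrow> Poly_Mapping.lookup c x = 0) \<Longrightarrow> Poly_Mapping.keys c \<subseteq> V"
  by (auto simp: in_keys_iff)

definition frag_split_at :: "'a set \<Rightarrow> 'a \<Rightarrow> nat \<Rightarrow> ('a \<Rightarrow>\<^sub>0 int) \<Rightarrow> ('a \<Rightarrow>\<^sub>0 int) \<times> int"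
  where "frag_split_at V v0 n c =
    (c - frag_cmul (Poly_Mapping.lookup c v0) (\<Sum>v\<in>V. frag_of v), Poly_Mapping.lookup c v0 mod int n)"

context
  fixes V :: "'a set" and v0 :: 'a and n :: nat
  assumes finite: "finite V" and v0: "v0 \<in> V"
begin

lemma frag_split_at_carrier:
  assumes "c \<in> carrier (free_Abelian_group V)"
  shows "frag_split_at V v0 n c \<in> carrier (DirProd (free_Abelian_group (V - {v0})) (integer_mod_group n))"
proof -
  have "Poly_Mapping.lookup c x = 0" if "x \<notin> V" for x
    using assms that by (auto simp: in_keys_iff)
  then have "Poly_Mapping.keys (c - frag_cmul (Poly_Mapping.lookup c v0) (\<Sum>v\<in>V. frag_of v)) \<subseteq> V - {v0}"
    using finite by (intro keys_subsetI) (auto simp: lookup_minus lookup_sum_frag_of)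
  moreover have "Poly_Mapping.lookup c v0 mod int n \<in> carrier (integer_mod_group n)"
    by (simp add: carrier_integer_mod_group)
  ultimately show ?thesis
    by (simp add: frag_split_at_def)
qed

lemma group_hom_frag_split_at:
  "group_hom (free_Abelian_group V) (DirProd (free_Abelian_group (V - {v0})) (integer_mod_group n))
     (frag_split_at V v0 n)"
proof (intro group_hom.intro group_hom_axioms.intro homI)
  show "group (DirProd (free_Abelian_group (V - {v0})) (integer_mod_group n))"
    by (intro DirProd_group) simp_all
  show "frag_split_at V v0 n c \<in> carrier (DirProd (free_Abelian_group (V - {v0})) (integer_mod_group n))"
    if "c \<in> carrier (free_Abelian_group V)" for c
    using that by (rule frag_split_at_carrier)
qed (simp_all add: frag_split_at_def lookup_add frag_cmul_distrib mod_add_eq)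

lemma frag_split_at_onto:
  "frag_split_at V v0 n ` carrier (free_Abelian_group V)
     = carrier (DirProd (free_Abelian_group (V - {v0})) (integer_mod_group n))"
proof (intro equalityI subsetI)
  fix z assume "z \<in> carrier (DirProd (free_Abelian_group (V - {v0})) (integer_mod_group n))"
  then obtain d r where z: "z = (d, r)" and d: "Poly_Mapping.keys d \<subseteq> V - {v0}"
    and r: "r mod int n = r"
    by (cases z) (auto simp: carrier_integer_mod_group split: if_splits)
  define c where "c = d + frag_cmul r (\<Sum>v\<in>V. frag_of v)"
  have "Poly_Mapping.lookup c v0 = r"
    using d finite v0 by (auto simp: c_def lookup_add lookup_sum_frag_of in_keys_iff)
  then have "frag_split_at V v0 n c = z"
    using r by (simp add: frag_split_at_def z c_def)
  moreover have "c \<in> carrier (free_Abelian_group V)"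
    using d finite by (auto intro!: keys_subsetI simp: c_def lookup_add lookup_sum_frag_of in_keys_iff)
  ultimately show "z \<in> frag_split_at V v0 n ` carrier (free_Abelian_group V)"
    by blast
qed (use frag_split_at_carrier in blast)

lemma kernel_frag_split_at:
  "kernel (free_Abelian_group V) (DirProd (free_Abelian_group (V - {v0})) (integer_mod_group n))
     (frag_split_at V v0 n) = range (\<lambda>k. frag_cmul (int n * k) (\<Sum>v\<in>V. frag_of v))"
proof (intro equalityI subsetI)
  fix c
  assume "c \<in> kernel (free_Abelian_group V) (DirProd (free_Abelian_group (V - {v0})) (integer_mod_group n))
    (frag_split_at V v0 n)"
  then have "frag_split_at V v0 n c = (0, 0)"
    by (simp add: kernel_def)
  then have c: "c = frag_cmul (Poly_Mapping.lookup c v0) (\<Sum>v\<in>V. frag_of v)"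
    and "int n dvd Poly_Mapping.lookup c v0"
    by (simp_all add: frag_split_at_def dvd_eq_mod_eq_0)
  then obtain k where "Poly_Mapping.lookup c v0 = int n * k"
    by (elim dvdE)
  with c show "c \<in> range (\<lambda>k. frag_cmul (int n * k) (\<Sum>v\<in>V. frag_of v))"
    by (metis rangeI)
next
  fix c assume "c \<in> range (\<lambda>k. frag_cmul (int n * k) (\<Sum>v\<in>V. frag_of v))"
  then obtain k where c: "c = frag_cmul (int n * k) (\<Sum>v\<in>V. frag_of v)"
    by blast
  have "c \<in> carrier (free_Abelian_group V)"
    using finite by (auto intro!: keys_subsetI simp: c lookup_sum_frag_of)
  then show "c \<in> kernel (free_Abelian_group V) (DirProd (free_Abelian_group (V - {v0})) (integer_mod_group n))
    (frag_split_at V v0 n)"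
    using finite v0 by (simp add: kernel_def frag_split_at_def c lookup_sum_frag_of)
qed

lemma free_Abelian_group_Mod_multiples_of_sum_iso:
  "free_Abelian_group V Mod range (\<lambda>k. frag_cmul (int n * k) (\<Sum>v\<in>V. frag_of v))
     \<cong> DirProd (free_Abelian_group {..<card V - 1}) (integer_mod_group n)"
proof -
  have "free_Abelian_group V Mod range (\<lambda>k. frag_cmul (int n * k) (\<Sum>v\<in>V. frag_of v))
      \<cong> DirProd (free_Abelian_group (V - {v0})) (integer_mod_group n)"
    using group_hom.FactGroup_iso[OF group_hom_frag_split_at frag_split_at_onto]
    by (simp add: kernel_frag_split_at)
  also have "\<dots> \<cong> DirProd (free_Abelian_group {..<card V - 1}) (integer_mod_group n)"
  proof (rule group.DirProd_iso_trans)
    have "V - {v0} \<approx> {..<card V - 1}"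
      using finite v0 by (simp add: eqpoll_iff_card)
    then show "free_Abelian_group (V - {v0}) \<cong> free_Abelian_group {..<card V - 1}"
      by (simp add: isomorphic_free_Abelian_groups)
  qed simp_all
  finally show ?thesis .
qed

end

lemma id_minus_frag_extend_identity_plus_all_ones:
  assumes "finite V" and "Poly_Mapping.keys c \<subseteq> V"
    and f: "\<And>w. w \<in> V \<Longrightarrow> f w = frag_of w + frag_cmul (int n) (\<Sum>v\<in>V. frag_of v)"
  shows "c - frag_extend f c = frag_cmul (- int n * (\<Sum>v\<in>V. Poly_Mapping.lookup c v)) (\<Sum>v\<in>V. frag_of v)"
  using assms(2)
proof (induction c rule: frag_induction)
  case (one x)
  then show ?case
    using assms(1) by (simp add: f)
next
  case (diff a b)
  have "(a - b) - frag_extend f (a - b) = (a - frag_extend f a) - (b - frag_extend f b)"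
    by (simp add: frag_extend_diff)
  also have "\<dots> = frag_cmul (- int n * (\<Sum>v\<in>V. Poly_Mapping.lookup a v) - - int n * (\<Sum>v\<in>V. Poly_Mapping.lookup b v))
      (\<Sum>v\<in>V. frag_of v)"
    by (simp only: diff.IH frag_cmul_diff_distrib)
  also have "\<dots> = frag_cmul (- int n * (\<Sum>v\<in>V. Poly_Mapping.lookup (a - b) v)) (\<Sum>v\<in>V. frag_of v)"
    by (simp add: lookup_minus sum_subtractf right_diff_distrib)
  finally show ?case .
qed simp

lemma BF_identity_plus_all_ones_iso:
  fixes W :: "('v, 'e) pre_digraph" and n :: nat
  assumes finite: "finite (verts W)" and v0: "v0 \<in> verts W"
    and adj: "\<And>w. w \<in> verts W \<Longrightarrow>
      adj_op W w = frag_of w + frag_cmul (int n) (\<Sum>v\<in>verts W. frag_of v)"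
  shows "BF W \<cong> DirProd (free_Abelian_group {..<card (verts W) - 1}) (integer_mod_group n)"
proof -
  define V where "V = verts W"
  note id_minus_adj = id_minus_frag_extend_identity_plus_all_ones[OF finite _ adj, folded V_def]
  have "(\<lambda>c. c - frag_extend (adj_op W) c) ` carrier (free_Abelian_group V) = range (\<lambda>k. frag_cmul (int n * k) (\<Sum>v\<in>V. frag_of v))"
  proof (intro equalityI subsetI)
    fix y assume "y \<in> (\<lambda>c. c - frag_extend (adj_op W) c) ` carrier (free_Abelian_group V)"
    then obtain c where "Poly_Mapping.keys c \<subseteq> V" and "y = c - frag_extend (adj_op W) c"
      by auto
    then have "y = frag_cmul (int n * - (\<Sum>v\<in>V. Poly_Mapping.lookup c v)) (\<Sum>v\<in>V. frag_of v)"
      by (simp add: id_minus_adj)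
    then show "y \<in> range (\<lambda>k. frag_cmul (int n * k) (\<Sum>v\<in>V. frag_of v))"
      by blast
  next
    fix y assume "y \<in> range (\<lambda>k. frag_cmul (int n * k) (\<Sum>v\<in>V. frag_of v))"
    then obtain k where y: "y = frag_cmul (int n * k) (\<Sum>v\<in>V. frag_of v)"
      by blast
    define c where "c = frag_cmul (- k) (frag_of v0)"
    have c: "c \<in> carrier (free_Abelian_group V)"
      using v0 keys_cmul[of "- k" "frag_of v0"] by (auto simp: c_def V_def)
    have "(\<Sum>v\<in>V. Poly_Mapping.lookup c v) = - k"
      using finite v0 by (simp add: c_def V_def if_distrib[where f = "\<lambda>x. _ * x"] cong: if_cong)
    then have "y = c - frag_extend (adj_op W) c"
      using id_minus_adj c by (simp add: y)
    with c show "y \<in> (\<lambda>c. c - frag_extend (adj_op W) c) ` carrier (free_Abelian_group V)"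
      by blast
  qed
  then show ?thesis
    using free_Abelian_group_Mod_multiples_of_sum_iso[OF finite v0, of n]
    by (simp add: BF_def V_def)
qed

lemma left_orbit_mult:
  assumes "group G" and "subgroup H G" and "h \<in> H" and "s \<in> carrier G"
  shows "left_orbit G H (x, h \<otimes>\<^bsub>G\<^esub> s) = left_orbit G H (x, s)"
proof -
  interpret group G
    by (fact assms(1))
  have h: "h \<in> carrier G"
    using assms(2,3) by (rule subgroup.mem_carrier)
  have "(x, g \<otimes>\<^bsub>G\<^esub> (h \<otimes>\<^bsub>G\<^esub> s)) \<in> left_orbit G H (x, s)" if "g \<in> H" for g
  proof -
    have "g \<otimes>\<^bsub>G\<^esub> (h \<otimes>\<^bsub>G\<^esub> s) = (g \<otimes>\<^bsub>G\<^esub> h) \<otimes>\<^bsub>G\<^esub> s" and "g \<otimes>\<^bsub>G\<^esub> h \<in> H"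
      using that h assms(2,3,4) by (simp_all add: m_assoc subgroup.mem_carrier subgroup.m_closed)
    then show ?thesis
      unfolding left_orbit_def by auto
  qed
  moreover have "(x, g \<otimes>\<^bsub>G\<^esub> s) \<in> left_orbit G H (x, h \<otimes>\<^bsub>G\<^esub> s)" if "g \<in> H" for g
  proof -
    have g: "g \<in> carrier G"
      using assms(2) that by (rule subgroup.mem_carrier)
    have "g \<otimes>\<^bsub>G\<^esub> s = (g \<otimes>\<^bsub>G\<^esub> inv\<^bsub>G\<^esub> h) \<otimes>\<^bsub>G\<^esub> (h \<otimes>\<^bsub>G\<^esub> s)"
      using g h assms(4) by (simp add: m_assoc[symmetric]) (simp add: m_assoc)
    moreover have "g \<otimes>\<^bsub>G\<^esub> inv\<^bsub>G\<^esub> h \<in> H"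
      using that assms(2,3) by (simp add: subgroup.m_closed subgroup.m_inv_closed)
    ultimately show ?thesis
      unfolding left_orbit_def by auto
  qed
  ultimately show ?thesis
    unfolding left_orbit_def by auto
qed

lemma left_orbit_eq_iff:
  assumes "group G" and "subgroup H G" and "s \<in> carrier G" and "t \<in> carrier G"
  shows "left_orbit G H (x, s) = left_orbit G H (y, t) \<longleftrightarrow> y = x \<and> (\<exists>h\<in>H. t = h \<otimes>\<^bsub>G\<^esub> s)"
proof
  assume orbits: "left_orbit G H (x, s) = left_orbit G H (y, t)"
  have "\<one>\<^bsub>G\<^esub> \<otimes>\<^bsub>G\<^esub> t = t" and "\<one>\<^bsub>G\<^esub> \<in> H"
    using assms(1,2,4) by (simp_all add: group.is_monoid subgroup.one_closed)
  then have "(y, t) \<in> left_orbit G H (y, t)"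
    unfolding left_orbit_def by force
  then have "(y, t) \<in> left_orbit G H (x, s)"
    using orbits by simp
  then show "y = x \<and> (\<exists>h\<in>H. t = h \<otimes>\<^bsub>G\<^esub> s)"
    by (auto simp: left_orbit_def)
next
  assume "y = x \<and> (\<exists>h\<in>H. t = h \<otimes>\<^bsub>G\<^esub> s)"
  then obtain h where "y = x" and h: "h \<in> H" and "t = h \<otimes>\<^bsub>G\<^esub> s"
    by blast
  then show "left_orbit G H (x, s) = left_orbit G H (y, t)"
    using left_orbit_mult[OF assms(1,2) h assms(3)] by metis
qed

lemma some_in_left_orbit:
  assumes "subgroup H G"
  obtains h where "h \<in> H" and "(SOME z. z \<in> left_orbit G H (x, s)) = (x, h \<otimes>\<^bsub>G\<^esub> s)"
proof -
  have "(x, \<one>\<^bsub>G\<^esub> \<otimes>\<^bsub>G\<^esub> s) \<in> left_orbit G H (x, s)"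
    using assms subgroup.one_closed unfolding left_orbit_def by fastforce
  then have "(SOME z. z \<in> left_orbit G H (x, s)) \<in> left_orbit G H (x, s)"
    by (rule someI)
  then show ?thesis
    using that by (auto simp: left_orbit_def)
qed

(* The quotient reads its incidence off an arbitrary (SOME) representative of an orbit; the
   choice does not matter because H acts on the left, which commutes with right multiplication
   by alpha e. *)

context
  fixes X :: "('v, 'e) pre_digraph" and G :: "('g, 'b) monoid_scheme" and H :: "'g set"
    and \<alpha> :: "'e \<Rightarrow> 'g"
  assumes group: "group G" and subgroup: "subgroup H G"
begin

abbreviation (input) "YH \<equiv> quotient_digraph (derived_digraph X G \<alpha>) G H"

lemma tail_quotient_derived_digraph:
  assumes "s \<in> carrier G"
  shows "tail YH (left_orbit G H (e, s)) = left_orbit G H (tail X e, s)"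
proof -
  obtain h where "h \<in> H" and "(SOME z. z \<in> left_orbit G H (e, s)) = (e, h \<otimes>\<^bsub>G\<^esub> s)"
    using some_in_left_orbit[OF subgroup] .
  then show ?thesis
    using left_orbit_mult[OF group subgroup _ assms]
    by (simp add: quotient_digraph_def derived_digraph_def)
qed

lemma head_quotient_derived_digraph:
  assumes "s \<in> carrier G" and "\<alpha> e \<in> carrier G"
  shows "head YH (left_orbit G H (e, s)) = left_orbit G H (head X e, s \<otimes>\<^bsub>G\<^esub> \<alpha> e)"
proof -
  interpret group G
    by (fact group)
  obtain h where h: "h \<in> H" and "(SOME z. z \<in> left_orbit G H (e, s)) = (e, h \<otimes>\<^bsub>G\<^esub> s)"
    using some_in_left_orbit[OF subgroup] .
  moreover have "h \<otimes>\<^bsub>G\<^esub> s \<otimes>\<^bsub>G\<^esub> \<alpha> e = h \<otimes>\<^bsub>G\<^esub> (s \<otimes>\<^bsub>G\<^esub> \<alpha> e)"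
    using h assms subgroup.mem_carrier[OF subgroup] by (simp add: m_assoc)
  moreover have "s \<otimes>\<^bsub>G\<^esub> \<alpha> e \<in> carrier G"
    using assms by simp
  ultimately show ?thesis
    using left_orbit_mult[OF group subgroup h \<open>s \<otimes>\<^bsub>G\<^esub> \<alpha> e \<in> carrier G\<close>]
    by (simp add: quotient_digraph_def derived_digraph_def)
qed

lemma adj_op_quotient_derived_digraph:
  assumes "\<alpha> \<in> arcs X \<rightarrow> carrier G" and "s \<in> carrier G"
  shows "adj_op YH (left_orbit G H (v, s))
    = (\<Sum>e\<in>{e \<in> arcs X. tail X e = v}. frag_of (left_orbit G H (head X e, s \<otimes>\<^bsub>G\<^esub> \<alpha> e)))"
proof -
  have out_arcs: "{\<epsilon> \<in> arcs YH. tail YH \<epsilon> = left_orbit G H (v, s)}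
    = (\<lambda>e. left_orbit G H (e, s)) ` {e \<in> arcs X. tail X e = v}"
  proof (intro equalityI subsetI)
    fix \<epsilon> assume "\<epsilon> \<in> {\<epsilon> \<in> arcs YH. tail YH \<epsilon> = left_orbit G H (v, s)}"
    then obtain e t where e: "e \<in> arcs X" and t: "t \<in> carrier G" and \<epsilon>: "\<epsilon> = left_orbit G H (e, t)"
      and "tail YH \<epsilon> = left_orbit G H (v, s)"
      by (auto simp: quotient_digraph_def derived_digraph_def)
    then have "left_orbit G H (tail X e, t) = left_orbit G H (v, s)"
      by (simp add: tail_quotient_derived_digraph)
    then have "tail X e = v" and "\<epsilon> = left_orbit G H (e, s)"
      using t assms(2) \<epsilon> by (auto simp: left_orbit_eq_iff[OF group subgroup] left_orbit_mult[OF group subgroup])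
    then show "\<epsilon> \<in> (\<lambda>e. left_orbit G H (e, s)) ` {e \<in> arcs X. tail X e = v}"
      using e by blast
  next
    fix \<epsilon> assume "\<epsilon> \<in> (\<lambda>e. left_orbit G H (e, s)) ` {e \<in> arcs X. tail X e = v}"
    then obtain e where "e \<in> arcs X" and "tail X e = v" and "\<epsilon> = left_orbit G H (e, s)"
      by blast
    then show "\<epsilon> \<in> {\<epsilon> \<in> arcs YH. tail YH \<epsilon> = left_orbit G H (v, s)}"
      using assms(2) tail_quotient_derived_digraph[OF assms(2)]
      by (auto simp: quotient_digraph_def derived_digraph_def)
  qed
  have "inj_on (\<lambda>e. left_orbit G H (e, s)) {e \<in> arcs X. tail X e = v}"
    using assms(2) by (auto intro!: inj_onI simp: left_orbit_eq_iff[OF group subgroup])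
  then show ?thesis
    unfolding adj_op_def out_arcs
    using assms by (simp add: sum.reindex head_quotient_derived_digraph Pi_iff)
qed

end

locale odd_prime =
  fixes p :: nat
  assumes prime: "prime p" and odd: "odd p"
begin

abbreviation J :: "int set"
  where "J \<equiv> generate (Delta p) {jconj p}"

abbreviation vertex :: "int \<Rightarrow> (unit \<times> int) set"
  where "vertex s \<equiv> left_orbit (Delta p) J ((), s)"

lemma p_ge_3: "p \<ge> 3"
  using prime odd prime_ge_2_nat[OF prime] by (cases "p = 2") auto

interpretation residues_prime p "residue_ring (int p)"
  by unfold_locales (rule prime)

lemma comm_group_Delta: "comm_group (Delta p)"
  unfolding Delta_def by (rule units_comm_group)

lemma group_Delta: "group (Delta p)"
  using comm_group_Delta by (simp add: comm_group_def)

lemma carrier_Delta: "carrier (Delta p) = {1..int p - 1}"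
  unfolding Delta_def units_of_carrier using res_prime_units_eq p_ge_3 by (simp add: of_nat_diff)

lemma mult_Delta: "x \<otimes>\<^bsub>Delta p\<^esub> y = x * y mod int p"
  unfolding Delta_def by (simp add: units_of_mult res_mult_eq)

lemma one_Delta: "\<one>\<^bsub>Delta p\<^esub> = 1"
  unfolding Delta_def by (simp add: units_of_one res_one_eq)

lemma jconj_eq: "jconj p = int p - 1"
  using p_ge_3 by (simp add: jconj_def sigma_def of_nat_diff zmod_minus1)

lemma jconj_mult: "s \<in> carrier (Delta p) \<Longrightarrow> jconj p \<otimes>\<^bsub>Delta p\<^esub> s = int p - s"
proof -
  assume "s \<in> carrier (Delta p)"
  then have "s mod int p = s" and "s \<noteq> 0"
    by (simp_all add: carrier_Delta)
  moreover have "(int p - 1) * s = - s + s * int p"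
    by (simp add: algebra_simps)
  then have "(int p - 1) * s mod int p = - s mod int p"
    by (metis mod_mult_self1)
  ultimately show ?thesis
    by (simp add: mult_Delta jconj_eq zmod_zminus1_eq_if)
qed

lemma jconj_carrier: "jconj p \<in> carrier (Delta p)"
  using p_ge_3 by (simp add: carrier_Delta jconj_eq)

lemma jconj_mult_jconj: "jconj p \<otimes>\<^bsub>Delta p\<^esub> jconj p = \<one>\<^bsub>Delta p\<^esub>"
  using jconj_mult[OF jconj_carrier] by (simp add: jconj_eq one_Delta)

lemma inv_jconj: "inv\<^bsub>Delta p\<^esub> jconj p = jconj p"
  using group_Delta jconj_carrier jconj_mult_jconj by (simp add: group.inv_equality)

lemma subgroup_J: "subgroup J (Delta p)"
  using group_Delta jconj_carrier by (simp add: group.generate_is_subgroup)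

lemma J_eq: "J = {\<one>\<^bsub>Delta p\<^esub>, jconj p}"
proof
  show "J \<subseteq> {\<one>\<^bsub>Delta p\<^esub>, jconj p}"
  proof
    fix x assume "x \<in> J"
    then show "x \<in> {\<one>\<^bsub>Delta p\<^esub>, jconj p}"
    proof (induction rule: generate.induct)
      case (eng h1 h2)
      then show ?case
        using comm_group_Delta jconj_carrier jconj_mult_jconj
        by (auto simp: comm_group_def group.is_monoid)
    qed (simp_all add: inv_jconj)
  qed
  show "{\<one>\<^bsub>Delta p\<^esub>, jconj p} \<subseteq> J"
    by (simp add: generate.one generate.incl)
qed

lemma vertex_eq_iff:
  assumes "s \<in> carrier (Delta p)" and "t \<in> carrier (Delta p)"
  shows "vertex s = vertex t \<longleftrightarrow> t = s \<or> t = int p - s"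
  using left_orbit_eq_iff[OF group_Delta subgroup_J assms, of "()" "()"] assms
  by (simp add: group.is_monoid[OF group_Delta] J_eq jconj_mult)

lemma verts_Yplus: "verts (Yplus p) = vertex ` carrier (Delta p)"
  by (auto simp: Yplus_def Y_def quotient_digraph_def derived_digraph_def bouquetX_def)

lemma card_verts_Yplus: "card (verts (Yplus p)) = (p - 1) div 2"
proof -
  obtain m where p_eq: "p = 2 * m + 1"
    using odd oddE by blast
  then have int_p: "int p = 2 * int m + 1"
    by simp
  have carrier: "carrier (Delta p) = {1..2 * int m}"
    unfolding carrier_Delta int_p by simp
  have "vertex ` {1..2 * int m} \<subseteq> vertex ` {1..int m}"
  proof
    fix y assume "y \<in> vertex ` {1..2 * int m}"
    then obtain s where s: "s \<in> {1..2 * int m}" and y: "y = vertex s"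
      by blast
    show "y \<in> vertex ` {1..int m}"
    proof (cases "s \<le> int m")
      case False
      then have "s \<in> carrier (Delta p)" and "int p - s \<in> carrier (Delta p)"
        and "int p - s \<in> {1..int m}"
        using s unfolding carrier int_p by auto
      then have "y = vertex (int p - s)" and "int p - s \<in> {1..int m}"
        by (simp_all add: y vertex_eq_iff)
      then show ?thesis
        by blast
    qed (use s y in auto)
  qed
  then have "verts (Yplus p) = vertex ` {1..int m}"
    by (auto simp: verts_Yplus carrier)
  moreover have "inj_on vertex {1..int m}"
  proof (rule inj_onI)
    fix s t assume "s \<in> {1..int m}" and "t \<in> {1..int m}" and "vertex s = vertex t"
    then show "s = t"
      using vertex_eq_iff[of s t] unfolding carrier int_p by auto
  qed
  ultimately have "card (verts (Yplus p)) = m"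
    by (simp add: card_image)
  then show ?thesis
    using p_eq by simp
qed

lemma alphaX_E0: "alphaX p E0 = \<one>\<^bsub>Delta p\<^esub>"
  using p_ge_3 by (simp add: alphaX_def sigma_def one_Delta)

lemma alphaX_E:
  assumes "i \<in> {1..p - 1}"
  shows "alphaX p (E i k) = inv\<^bsub>Delta p\<^esub> (int i)"
proof -
  have "int i mod int p = int i"
    using assms p_ge_3 by (intro mod_pos_pos_trivial) auto
  then show ?thesis
    by (simp add: alphaX_def sigma_def)
qed

lemma arcs_bouquetX: "arcs (bouquetX p) = insert E0 ((\<lambda>(i, k). E i k) ` (SIGMA i:{1..p - 1}. {1..i}))"
  by (auto simp: bouquetX_def)

lemma alphaX_carrier: "alphaX p \<in> arcs (bouquetX p) \<rightarrow> carrier (Delta p)"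
proof
  fix e assume "e \<in> arcs (bouquetX p)"
  then consider "e = E0" | i k where "i \<in> {1..p - 1}" and "e = E i k"
    by (auto simp: arcs_bouquetX)
  then show "alphaX p e \<in> carrier (Delta p)"
  proof cases
    case 1
    then show ?thesis
      using group_Delta by (simp add: alphaX_E0 group.is_monoid)
  next
    case 2
    then have "int i \<in> carrier (Delta p)"
      using p_ge_3 by (auto simp: carrier_Delta)
    then show ?thesis
      using 2 group_Delta by (simp add: alphaX_E group.inv_closed)
  qed
qed

lemma adj_op_Yplus_sum_arcs:
  assumes "s \<in> carrier (Delta p)"
  shows "adj_op (Yplus p) (vertex s) = (\<Sum>e\<in>arcs (bouquetX p). frag_of (vertex (s \<otimes>\<^bsub>Delta p\<^esub> alphaX p e)))"
proof -
  have "Yplus p = quotient_digraph (derived_digraph (bouquetX p) (Delta p) (alphaX p)) (Delta p) J"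
    by (simp add: Yplus_def Y_def)
  moreover have "{e \<in> arcs (bouquetX p). tail (bouquetX p) e = ()} = arcs (bouquetX p)"
    and "head (bouquetX p) e = ()" for e
    by (auto simp: bouquetX_def)
  ultimately show ?thesis
    using adj_op_quotient_derived_digraph[OF group_Delta subgroup_J alphaX_carrier assms, of "()"]
    by (simp only:)
qed

lemma adj_op_Yplus:
  assumes "s \<in> carrier (Delta p)"
  shows "adj_op (Yplus p) (vertex s)
    = frag_of (vertex s) + (\<Sum>u\<in>carrier (Delta p). frag_cmul u (frag_of (vertex (s \<otimes>\<^bsub>Delta p\<^esub> inv\<^bsub>Delta p\<^esub> u))))"
proof -
  define F where "F e = frag_of (vertex (s \<otimes>\<^bsub>Delta p\<^esub> alphaX p e))" for e
  define S where "S = (SIGMA i:{1..p - 1}. {1..i})"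
  have arcs: "arcs (bouquetX p) = insert E0 ((\<lambda>(i, k). E i k) ` S)"
    unfolding S_def by (rule arcs_bouquetX)
  have inj: "inj_on (\<lambda>(i, k). E i k) S" and "E0 \<notin> (\<lambda>(i, k). E i k) ` S" and "finite S"
    by (auto simp: inj_on_def S_def)
  then have "(\<Sum>e\<in>arcs (bouquetX p). F e) = F E0 + (\<Sum>e\<in>(\<lambda>(i, k). E i k) ` S. F e)"
    unfolding arcs by simp
  also have "(\<Sum>e\<in>(\<lambda>(i, k). E i k) ` S. F e) = (\<Sum>(i, k)\<in>S. F (E i k))"
    unfolding sum.reindex[OF inj] by (simp add: comp_def case_prod_beta)
  also have "\<dots> = (\<Sum>i\<in>{1..p - 1}. \<Sum>k\<in>{1..i}. F (E i k))"
    unfolding S_def by (rule sum.Sigma[symmetric]) auto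
  also have "\<dots> = (\<Sum>i\<in>{1..p - 1}. frag_cmul (int i) (frag_of (vertex (s \<otimes>\<^bsub>Delta p\<^esub> inv\<^bsub>Delta p\<^esub> int i))))"
    by (intro sum.cong refl) (simp add: F_def alphaX_E sum_const_frag)
  also have "\<dots> = (\<Sum>u\<in>carrier (Delta p). frag_cmul u (frag_of (vertex (s \<otimes>\<^bsub>Delta p\<^esub> inv\<^bsub>Delta p\<^esub> u))))"
  proof -
    have "carrier (Delta p) = int ` {1..p - 1}"
      using p_ge_3 by (simp add: carrier_Delta image_int_atLeastAtMost of_nat_diff)
    then show ?thesis
      by (simp only: sum.reindex[OF inj_on_of_nat] comp_def)
  qed
  also have "F E0 = frag_of (vertex s)"
    using assms group_Delta by (simp add: F_def alphaX_E0 group.is_monoid)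
  finally show ?thesis
    by (simp add: adj_op_Yplus_sum_arcs[OF assms] F_def)
qed

lemma vertex_div_eq_fiber:
  assumes s: "s \<in> carrier (Delta p)" and t: "t \<in> carrier (Delta p)"
  defines "x \<equiv> inv\<^bsub>Delta p\<^esub> t \<otimes>\<^bsub>Delta p\<^esub> s"
  shows "{u \<in> carrier (Delta p). vertex (s \<otimes>\<^bsub>Delta p\<^esub> inv\<^bsub>Delta p\<^esub> u) = vertex t} = {x, int p - x}"
proof -
  interpret D: comm_group "Delta p"
    by (fact comm_group_Delta)
  have x: "x \<in> carrier (Delta p)"
    using s t by (simp add: x_def)
  have t': "int p - t \<in> carrier (Delta p)" and x': "int p - x \<in> carrier (Delta p)"
    using t x by (simp_all add: carrier_Delta)
  have "inv\<^bsub>Delta p\<^esub> (jconj p \<otimes>\<^bsub>Delta p\<^esub> t) \<otimes>\<^bsub>Delta p\<^esub> s = jconj p \<otimes>\<^bsub>Delta p\<^esub> x"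
    using jconj_carrier s t by (simp add: x_def D.inv_mult inv_jconj D.m_ac)
  then have jx: "inv\<^bsub>Delta p\<^esub> (int p - t) \<otimes>\<^bsub>Delta p\<^esub> s = int p - x"
    using t x by (simp add: jconj_mult)
  have solve: "b = s \<otimes>\<^bsub>Delta p\<^esub> inv\<^bsub>Delta p\<^esub> u \<longleftrightarrow> u = inv\<^bsub>Delta p\<^esub> b \<otimes>\<^bsub>Delta p\<^esub> s"
    if "b \<in> carrier (Delta p)" and "u \<in> carrier (Delta p)" for b u
    using that s by (simp add: D.inv_solve_right D.inv_solve_left)
  have "vertex (s \<otimes>\<^bsub>Delta p\<^esub> inv\<^bsub>Delta p\<^esub> u) = vertex t \<longleftrightarrow> u = x \<or> u = int p - x"
    if u: "u \<in> carrier (Delta p)" for u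
  proof -
    have "s \<otimes>\<^bsub>Delta p\<^esub> inv\<^bsub>Delta p\<^esub> u \<in> carrier (Delta p)"
      using s u by simp
    then have "vertex (s \<otimes>\<^bsub>Delta p\<^esub> inv\<^bsub>Delta p\<^esub> u) = vertex t
        \<longleftrightarrow> t = s \<otimes>\<^bsub>Delta p\<^esub> inv\<^bsub>Delta p\<^esub> u \<or> int p - t = s \<otimes>\<^bsub>Delta p\<^esub> inv\<^bsub>Delta p\<^esub> u"
      using t by (auto simp: vertex_eq_iff)
    also have "\<dots> \<longleftrightarrow> u = x \<or> u = int p - x"
      using solve[OF t u] solve[OF t' u] jx by (simp add: x_def)
    finally show ?thesis .
  qed
  then show ?thesis
    using x x' by auto
qed

lemma sum_units_weighted_vertex_div:
  assumes s: "s \<in> carrier (Delta p)"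
  shows "(\<Sum>u\<in>carrier (Delta p). frag_cmul u (frag_of (vertex (s \<otimes>\<^bsub>Delta p\<^esub> inv\<^bsub>Delta p\<^esub> u))))
    = frag_cmul (int p) (\<Sum>v\<in>verts (Yplus p). frag_of v)"
    (is "?T = _")
proof (rule poly_mapping_eqI)
  have fin: "finite (carrier (Delta p))" and fin_verts: "finite (verts (Yplus p))"
    by (simp_all add: carrier_Delta verts_Yplus)
  fix y
  have "Poly_Mapping.lookup ?T y = (\<Sum>u\<in>{u \<in> carrier (Delta p). vertex (s \<otimes>\<^bsub>Delta p\<^esub> inv\<^bsub>Delta p\<^esub> u) = y}. u)"
    by (rule lookup_sum_frag_cmul_frag_of[OF fin])
  also have "\<dots> = int p * (if y \<in> verts (Yplus p) then 1 else 0)"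
  proof (cases "y \<in> verts (Yplus p)")
    case True
    then obtain t where t: "t \<in> carrier (Delta p)" and y: "y = vertex t"
      by (auto simp: verts_Yplus)
    define x where "x = inv\<^bsub>Delta p\<^esub> t \<otimes>\<^bsub>Delta p\<^esub> s"
    have "x \<noteq> int p - x"
      using odd by (metis add_diff_cancel_left' diff_add_cancel even_add even_of_nat mult_2 odd_add)
    then have "(\<Sum>u\<in>{x, int p - x}. u) = int p"
      by simp
    then show ?thesis
      using True by (simp add: y vertex_div_eq_fiber[OF s t] x_def)
  next
    case False
    have "vertex (s \<otimes>\<^bsub>Delta p\<^esub> inv\<^bsub>Delta p\<^esub> u) \<in> verts (Yplus p)" if "u \<in> carrier (Delta p)" for u
      unfolding verts_Yplus using that s group_Delta
      by (intro imageI) (simp add: group.inv_closed group.is_monoid monoid.m_closed)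
    then have "{u \<in> carrier (Delta p). vertex (s \<otimes>\<^bsub>Delta p\<^esub> inv\<^bsub>Delta p\<^esub> u) = y} = {}"
      using False by blast
    then show ?thesis
      using False by (simp only: sum.empty) simp
  qed
  also have "\<dots> = Poly_Mapping.lookup (frag_cmul (int p) (\<Sum>v\<in>verts (Yplus p). frag_of v)) y"
    using fin_verts by (simp add: lookup_sum_frag_of)
  finally show "Poly_Mapping.lookup ?T y = \<dots>" .
qed

end

theorem proposition5p4:
  fixes p :: nat
  assumes "prime p" and "odd p"
  shows "BF (Yplus p) \<cong> DirProd (free_Abelian_group {..<(p - 3) div 2}) (integer_mod_group p)"
proof -
  interpret odd_prime p
    using assms by unfold_locales
  have "vertex 1 \<in> verts (Yplus p)"
    using p_ge_3 by (simp add: verts_Yplus carrier_Delta)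
  moreover have "card (verts (Yplus p)) - 1 = (p - 3) div 2"
    using p_ge_3 by (simp add: card_verts_Yplus)
  moreover have "adj_op (Yplus p) w = frag_of w + frag_cmul (int p) (\<Sum>v\<in>verts (Yplus p). frag_of v)"
    if "w \<in> verts (Yplus p)" for w
    using that by (auto simp: verts_Yplus adj_op_Yplus sum_units_weighted_vertex_div)
  ultimately show ?thesis
    using BF_identity_plus_all_ones_iso[of "Yplus p" "vertex 1" p]
    by (simp add: verts_Yplus carrier_Delta)
qed

end
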